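(* Let $\lambda$ be a partition with $|\lambda| = k$. Then for all $n \in \mathbb{N}$ (with $\mathbb{N}=\{0,1,2,\dots\}$), \[ \frac{1}{\# \mathcal{OT}(\lambda,k+2n)\cdot(2n+k+1)} \sum_{T \in \mathcal{OT}(\lambda,k+2n)} \mathrm{wt}(T) = \frac{n}{3} + \frac{k}{2}.\]
   Context: Young's lattice is the poset of all integer partitions ordered by inclusion of Young diagrams; write $\mu \lessdot \lambda$ if the Young diagram of $\lambda$ is obtained from that of $\mu$ by adding one box. $|\lambda|$ denotes the size (number of boxes) of $\lambda$. A walk in Young's lattice is a sequence of partitions $(\lambda^{0},\lambda^{1},\ldots,\lambda^{l})$ such that for each $1\le i\le l$ either $\lambda^{i-1}\lessdot\lambda^{i}$ or $\lambda^{i}\lessdot\lambda^{i-1}$. An oscillating tableau of shape $\lambda$ and length $l$ is such a walk with $\lambda^{0}=\emptyset$ (the empty partition) and $\lambda^{l}=\lambda$; $\mathcal{OT}(\lambda,l)$ denotes the set of all of them. The weight of $T=(\lambda^{0},\ldots,\lambda^{l})$ is $\mathrm{wt}(T) := \sum_{i=0}^{l}|\lambda^{i}|$. *)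

theory Defs
  imports Complex_Main
begin

definition is_partition :: "nat list \<Rightarrow> bool" where
  "is_partition la \<longleftrightarrow> sorted_wrt (\<ge>) la \<and> (\<forall>x\<in>set la. 0 < x)"

definition psize :: "nat list \<Rightarrow> nat" where
  "psize la = sum_list la"

definition diagram :: "nat list \<Rightarrow> (nat \<times> nat) set" where
  "diagram la = {(i, j). i < length la \<and> j < la ! i}"

definition covers :: "nat list \<Rightarrow> nat list \<Rightarrow> bool" where
  "covers mu la \<longleftrightarrow> is_partition mu \<and> is_partition la \<and>
     (\<exists>c. c \<notin> diagram mu \<and> diagram la = insert c (diagram mu))"

definition OT :: "nat list \<Rightarrow> nat \<Rightarrow> nat list list set" where
  "OT la l = {T. length T = l + 1 \<and> T ! 0 = [] \<and> T ! l = la \<and>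
     (\<forall>i. 1 \<le> i \<and> i \<le> l \<longrightarrow> covers (T ! (i - 1)) (T ! i) \<or> covers (T ! i) (T ! (i - 1)))}"

definition wt :: "nat list list \<Rightarrow> nat" where
  "wt T = (\<Sum>i<length T. psize (T ! i))"

end

theory Submission
  imports Defs
begin

text \<open>
  Let f(mu) be the number of standard Young tableaux of shape mu. Removing the last step of a
  tableau shows that f(mu) is the sum of f(nu) over the partitions nu covered by mu. A diamond
  bijection between up-down and down-up paths of Young's lattice, together with the fact that a
  partition has exactly one more addable than removable cell, gives the dual identity: the sum of
  f(nu) over the partitions nu covering mu is (|mu| + 1) f(mu). With these two identities,
  induction on the length shows that for |mu| = m there are A(m, n) f(mu) oscillating tableaux of
  shape mu and length m + 2n, where A(m, n) = (m + 2n)! / (m! 2^n n!), and that their weights add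
  up to A(m, n) (m + 2n + 1) (n/3 + m/2) f(mu).
\<close>

section \<open>Young diagrams as finite down-sets\<close>

definition young_ideal :: "(nat \<times> nat) set \<Rightarrow> bool" where
  "young_ideal D \<longleftrightarrow> finite D \<and>
     (\<forall>i j i' j'. (i, j) \<in> D \<longrightarrow> i' \<le> i \<longrightarrow> j' \<le> j \<longrightarrow> (i', j') \<in> D)"

definition row_length :: "(nat \<times> nat) set \<Rightarrow> nat \<Rightarrow> nat" where
  "row_length D i = card {j. (i, j) \<in> D}"

definition partition_of :: "(nat \<times> nat) set \<Rightarrow> nat list" where
  "partition_of D = map (row_length D) [0..<card {i. (i, 0) \<in> D}]"

lemma downward_closed_eq_lessThan:
  assumes "finite S" "\<And>x y. x \<in> S \<Longrightarrow> y \<le> x \<Longrightarrow> y \<in> S"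
  shows "S = {..<card S}"
proof -
  have "x < card S" if "x \<in> S" for x
  proof -
    have "{..x} \<subseteq> S" using assms(2) that by auto
    then have "card {..x} \<le> card S" using assms(1) by (rule card_mono[rotated])
    then show ?thesis by simp
  qed
  then have "S \<subseteq> {..<card S}" by auto
  then show ?thesis using card_subset_eq[of "{..<card S}" S] by simp
qed

lemma diagram_eq_Sigma: "diagram la = Sigma {..<length la} (\<lambda>i. {..<la ! i})"
  unfolding diagram_def by auto

lemma finite_diagram: "finite (diagram la)"
  unfolding diagram_eq_Sigma by auto

lemma psize_eq_card_diagram: "psize la = card (diagram la)"
  unfolding psize_def diagram_eq_Sigma
  by (simp add: card_SigmaI sum_list_sum_nth atLeast0LessThan)

lemma partition_nth_antimono:
  assumes "is_partition la" "i' \<le> i" "i < length la"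
  shows "la ! i \<le> la ! i'"
  using assms sorted_wrt_nth_less[of "(\<ge>)" la i' i]
  unfolding is_partition_def by (cases "i' = i") auto

lemma partition_nth_pos: "is_partition la \<Longrightarrow> i < length la \<Longrightarrow> 0 < la ! i"
  unfolding is_partition_def by auto

lemma young_ideal_diagram:
  assumes "is_partition la"
  shows "young_ideal (diagram la)"
  unfolding young_ideal_def
proof (intro conjI allI impI finite_diagram)
  fix i j i' j' assume "(i, j) \<in> diagram la" "i' \<le> i" "j' \<le> j"
  with partition_nth_antimono[OF assms, of i' i] show "(i', j') \<in> diagram la"
    unfolding diagram_def by auto
qed

lemma young_ideal_row:
  assumes "young_ideal D"
  shows "{j. (i, j) \<in> D} = {..<row_length D i}"
  unfolding row_length_def
proof (rule downward_closed_eq_lessThan)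
  have "{j. (i, j) \<in> D} \<subseteq> snd ` D" by force
  then show "finite {j. (i, j) \<in> D}"
    using assms finite_subset unfolding young_ideal_def by blast
qed (use assms in \<open>auto simp: young_ideal_def\<close>)

lemma young_ideal_column:
  assumes "young_ideal D"
  shows "{i. (i, 0) \<in> D} = {..<card {i. (i, 0) \<in> D}}"
proof (rule downward_closed_eq_lessThan)
  have "{i. (i, 0) \<in> D} \<subseteq> fst ` D" by force
  then show "finite {i. (i, 0) \<in> D}"
    using assms finite_subset unfolding young_ideal_def by blast
qed (use assms in \<open>auto simp: young_ideal_def\<close>)

lemma
  assumes "young_ideal D"
  shows is_partition_partition_of: "is_partition (partition_of D)"
    and diagram_partition_of: "diagram (partition_of D) = D"
proof -
  let ?h = "card {i. (i, 0) \<in> D}"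
  have row: "(i, j) \<in> D \<longleftrightarrow> j < row_length D i" for i j
    using young_ideal_row[OF assms] by blast
  have column: "(i, 0) \<in> D \<longleftrightarrow> i < ?h" for i
    using young_ideal_column[OF assms] by blast
  have "row_length D i \<le> row_length D i'" if "i' \<le> i" for i i'
  proof -
    have "{j. (i, j) \<in> D} \<subseteq> {j. (i', j) \<in> D}"
      using assms that unfolding young_ideal_def by auto
    then show ?thesis unfolding young_ideal_row[OF assms] by simp
  qed
  moreover have "0 < row_length D i" if "i < ?h" for i
    using row[of i 0] column[of i] that by simp
  ultimately show "is_partition (partition_of D)"
    unfolding is_partition_def partition_of_def by (auto simp: sorted_wrt_iff_nth_less)
  have mem: "(i, j) \<in> D \<longleftrightarrow> i < ?h \<and> j < row_length D i" for i j
  proof -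
    have "(i, j) \<in> D \<Longrightarrow> (i, 0) \<in> D" using assms unfolding young_ideal_def by blast
    then show ?thesis using row[of i j] column[of i] by blast
  qed
  show "diagram (partition_of D) = D"
  proof (rule set_eqI)
    fix c :: "nat \<times> nat"
    obtain i j where "c = (i, j)" by fastforce
    then show "c \<in> diagram (partition_of D) \<longleftrightarrow> c \<in> D"
      using mem[of i j] by (auto simp: diagram_def partition_of_def)
  qed
qed

lemma partition_of_diagram:
  assumes "is_partition la"
  shows "partition_of (diagram la) = la"
proof -
  have "{i. (i, 0) \<in> diagram la} = {..<length la}"
    using partition_nth_pos[OF assms] unfolding diagram_def by auto
  moreover have "row_length (diagram la) i = la ! i" if "i < length la" for i
    unfolding row_length_def diagram_def using that by simp
  ultimately show ?thesis by (intro nth_equalityI) (simp_all add: partition_of_def)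
qed

lemma diagram_inject:
  "is_partition la \<Longrightarrow> is_partition mu \<Longrightarrow> diagram la = diagram mu \<longleftrightarrow> la = mu"
  by (metis partition_of_diagram)

lemma young_ideal_insert_iff:
  assumes "young_ideal D"
  shows "young_ideal (insert (i, j) D) \<longleftrightarrow>
           (\<forall>i' j'. i' \<le> i \<longrightarrow> j' \<le> j \<longrightarrow> (i', j') \<noteq> (i, j) \<longrightarrow> (i', j') \<in> D)"
  using assms unfolding young_ideal_def by blast

lemma young_ideal_remove_iff:
  assumes "young_ideal D"
  shows "young_ideal (D - {(i, j)}) \<longleftrightarrow>
           (\<forall>i' j'. i \<le> i' \<longrightarrow> j \<le> j' \<longrightarrow> (i', j') \<noteq> (i, j) \<longrightarrow> (i', j') \<notin> D)"
  using assms unfolding young_ideal_def by blast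

section \<open>Covers, addable and removable cells\<close>

definition ups :: "nat list \<Rightarrow> nat list set" where
  "ups mu = {la. covers mu la}"

definition downs :: "nat list \<Rightarrow> nat list set" where
  "downs la = {mu. covers mu la}"

definition addable :: "(nat \<times> nat) set \<Rightarrow> (nat \<times> nat) set" where
  "addable D = {c. c \<notin> D \<and> young_ideal (insert c D)}"

definition removable :: "(nat \<times> nat) set \<Rightarrow> (nat \<times> nat) set" where
  "removable D = {c \<in> D. young_ideal (D - {c})}"

lemma bij_betw_addable_ups:
  assumes "is_partition mu"
  shows "bij_betw (\<lambda>c. partition_of (insert c (diagram mu))) (addable (diagram mu)) (ups mu)"
proof (rule bij_betw_imageI)
  show "inj_on (\<lambda>c. partition_of (insert c (diagram mu))) (addable (diagram mu))"
  proof (rule inj_onI)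
    fix c d assume c: "c \<in> addable (diagram mu)" and d: "d \<in> addable (diagram mu)"
      and eq: "partition_of (insert c (diagram mu)) = partition_of (insert d (diagram mu))"
    have "insert c (diagram mu) = diagram (partition_of (insert c (diagram mu)))"
      using c by (simp add: addable_def diagram_partition_of)
    also have "\<dots> = insert d (diagram mu)"
      using d by (simp add: eq addable_def diagram_partition_of)
    finally show "c = d" using c d unfolding addable_def by blast
  qed
  show "(\<lambda>c. partition_of (insert c (diagram mu))) ` addable (diagram mu) = ups mu"
  proof (intro equalityI subsetI)
    fix la assume "la \<in> (\<lambda>c. partition_of (insert c (diagram mu))) ` addable (diagram mu)"
    then obtain c where c: "c \<notin> diagram mu" "young_ideal (insert c (diagram mu))"
      and la: "la = partition_of (insert c (diagram mu))"
      unfolding addable_def by auto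
    show "la \<in> ups mu"
      unfolding ups_def covers_def mem_Collect_eq la diagram_partition_of[OF c(2)]
      using assms is_partition_partition_of[OF c(2)] c(1) by (intro conjI exI[of _ c]) simp_all
  next
    fix la assume "la \<in> ups mu"
    then obtain c where la: "is_partition la" and c: "c \<notin> diagram mu"
      and D: "diagram la = insert c (diagram mu)"
      unfolding ups_def covers_def by auto
    have "c \<in> addable (diagram mu)"
      unfolding addable_def using c young_ideal_diagram[OF la] D by simp
    moreover have "la = partition_of (insert c (diagram mu))"
      using partition_of_diagram[OF la] D by simp
    ultimately show "la \<in> (\<lambda>c. partition_of (insert c (diagram mu))) ` addable (diagram mu)"
      by blast
  qed
qed

lemma bij_betw_removable_downs:
  assumes "is_partition la"
  shows "bij_betw (\<lambda>c. partition_of (diagram la - {c})) (removable (diagram la)) (downs la)"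
proof (rule bij_betw_imageI)
  show "inj_on (\<lambda>c. partition_of (diagram la - {c})) (removable (diagram la))"
  proof (rule inj_onI)
    fix c d assume c: "c \<in> removable (diagram la)" and d: "d \<in> removable (diagram la)"
      and eq: "partition_of (diagram la - {c}) = partition_of (diagram la - {d})"
    have "diagram la - {c} = diagram (partition_of (diagram la - {c}))"
      using c by (simp add: removable_def diagram_partition_of)
    also have "\<dots> = diagram la - {d}"
      using d by (simp add: eq removable_def diagram_partition_of)
    finally show "c = d" using c d unfolding removable_def by blast
  qed
  show "(\<lambda>c. partition_of (diagram la - {c})) ` removable (diagram la) = downs la"
  proof (intro equalityI subsetI)
    fix mu assume "mu \<in> (\<lambda>c. partition_of (diagram la - {c})) ` removable (diagram la)"
    then obtain c where c: "c \<in> diagram la" "young_ideal (diagram la - {c})"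
      and mu: "mu = partition_of (diagram la - {c})"
      unfolding removable_def by auto
    show "mu \<in> downs la"
      unfolding downs_def covers_def mem_Collect_eq mu diagram_partition_of[OF c(2)]
      using assms is_partition_partition_of[OF c(2)] c(1) by (intro conjI exI[of _ c]) auto
  next
    fix mu assume "mu \<in> downs la"
    then obtain c where mu: "is_partition mu" and c: "c \<notin> diagram mu"
      and D: "diagram la = insert c (diagram mu)"
      unfolding downs_def covers_def by auto
    have D': "diagram mu = diagram la - {c}" using c D by simp
    have "young_ideal (diagram la - {c})" using young_ideal_diagram[OF mu] D' by simp
    then have "c \<in> removable (diagram la)" unfolding removable_def using D by simp
    moreover have "mu = partition_of (diagram la - {c})"
      using partition_of_diagram[OF mu] D' by simp
    ultimately show "mu \<in> (\<lambda>c. partition_of (diagram la - {c})) ` removable (diagram la)"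
      by blast
  qed
qed

definition addable_rows :: "nat list \<Rightarrow> nat set" where
  "addable_rows la = insert (length la) {i. i < length la \<and> (i = 0 \<or> la ! i < la ! (i - 1))}"

definition removable_rows :: "nat list \<Rightarrow> nat set" where
  "removable_rows la = {i. i < length la \<and> (Suc i = length la \<or> la ! Suc i < la ! i)}"

lemma addable_rows_eq: "addable_rows la = insert 0 (Suc ` removable_rows la)"
proof (intro equalityI subsetI)
  fix i assume "i \<in> addable_rows la"
  then show "i \<in> insert 0 (Suc ` removable_rows la)"
    unfolding addable_rows_def removable_rows_def by (cases i) auto
next
  fix i assume "i \<in> insert 0 (Suc ` removable_rows la)"
  then show "i \<in> addable_rows la"
    unfolding addable_rows_def removable_rows_def by (cases "length la") auto
qed

lemma card_addable_rows: "card (addable_rows la) = Suc (card (removable_rows la))"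
proof -
  have "finite (removable_rows la)" unfolding removable_rows_def by simp
  then show ?thesis unfolding addable_rows_eq by (simp add: card_image)
qed

lemma addable_rows_addable:
  assumes la: "is_partition la" and i: "i \<in> addable_rows la"
  shows "(i, if i < length la then la ! i else 0) \<in> addable (diagram la)" (is "?c \<in> _")
proof -
  define c where c: "c = ?c"
  have "(i', j') \<in> diagram la" if "i' \<le> i" "j' \<le> snd c" "(i', j') \<noteq> c" for i' j'
  proof (cases "i' = i")
    case True
    then show ?thesis using that i c unfolding addable_rows_def diagram_def by (auto split: if_splits)
  next
    case False
    then have "i' < i" "i \<le> length la" using that(1) i unfolding addable_rows_def by auto
    moreover have "snd c < la ! i'"
    proof (cases "i < length la")
      case True
      then have "la ! i < la ! (i - 1)" using i \<open>i' < i\<close> unfolding addable_rows_def by auto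
      moreover have "la ! (i - 1) \<le> la ! i'"
        using partition_nth_antimono[OF la, of i' "i - 1"] True \<open>i' < i\<close> by simp
      ultimately show ?thesis using True c by simp
    qed (use c partition_nth_pos[OF la] \<open>i' < i\<close> \<open>i \<le> length la\<close> in auto)
    ultimately show ?thesis using that(2) unfolding diagram_def by auto
  qed
  then have "young_ideal (insert c (diagram la))"
    using young_ideal_insert_iff[OF young_ideal_diagram[OF la]] c by simp
  moreover have "c \<notin> diagram la" using c unfolding diagram_def by auto
  ultimately show ?thesis using c unfolding addable_def by simp
qed

lemma addable_diagram:
  assumes la: "is_partition la"
  shows "addable (diagram la) = (\<lambda>i. (i, if i < length la then la ! i else 0)) ` addable_rows la"
proof (intro equalityI subsetI)
  fix c assume "c \<in> addable (diagram la)"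
  moreover obtain i j where c: "c = (i, j)" by fastforce
  ultimately have out: "(i, j) \<notin> diagram la" and "young_ideal (insert (i, j) (diagram la))"
    unfolding addable_def by auto
  then have below: "\<And>i' j'. i' \<le> i \<Longrightarrow> j' \<le> j \<Longrightarrow> (i', j') \<noteq> (i, j) \<Longrightarrow> (i', j') \<in> diagram la"
    using young_ideal_insert_iff[OF young_ideal_diagram[OF la], of i j] by blast
  show "c \<in> (\<lambda>i. (i, if i < length la then la ! i else 0)) ` addable_rows la"
  proof (cases "j = 0")
    case True
    have "\<not> i < length la" using out True partition_nth_pos[OF la, of i] unfolding diagram_def by auto
    moreover have "\<not> length la < i" using below[of "i - 1" 0] True unfolding diagram_def by (cases i) auto
    ultimately show ?thesis using c True unfolding addable_rows_def by auto
  next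
    case False
    then have "(i, j - 1) \<in> diagram la" using below[of i "j - 1"] by simp
    with out have "i < length la" "j = la ! i" unfolding diagram_def by auto
    moreover have "la ! i < la ! (i - 1)" if "i \<noteq> 0"
      using below[of "i - 1" j] that \<open>j = la ! i\<close> unfolding diagram_def by auto
    ultimately show ?thesis using c unfolding addable_rows_def by force
  qed
next
  fix c assume "c \<in> (\<lambda>i. (i, if i < length la then la ! i else 0)) ` addable_rows la"
  then show "c \<in> addable (diagram la)" using addable_rows_addable[OF la] by blast
qed

lemma removable_diagram:
  assumes la: "is_partition la"
  shows "removable (diagram la) = (\<lambda>i. (i, la ! i - 1)) ` removable_rows la"
proof (intro equalityI subsetI)
  fix c assume "c \<in> removable (diagram la)"
  moreover obtain i j where c: "c = (i, j)" by fastforce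
  ultimately have "(i, j) \<in> diagram la" and "young_ideal (diagram la - {(i, j)})"
    unfolding removable_def by auto
  then have above: "\<And>i' j'. i \<le> i' \<Longrightarrow> j \<le> j' \<Longrightarrow> (i', j') \<noteq> (i, j) \<Longrightarrow> (i', j') \<notin> diagram la"
    using young_ideal_remove_iff[OF young_ideal_diagram[OF la], of i j] by blast
  have "i < length la" "j < la ! i" using \<open>(i, j) \<in> diagram la\<close> unfolding diagram_def by auto
  moreover from this have "j = la ! i - 1" using above[of i "Suc j"] unfolding diagram_def by auto
  moreover have "i \<in> removable_rows la"
    using above[of "Suc i" j] calculation unfolding removable_rows_def diagram_def by auto
  ultimately show "c \<in> (\<lambda>i. (i, la ! i - 1)) ` removable_rows la" using c by blast
next
  fix c assume "c \<in> (\<lambda>i. (i, la ! i - 1)) ` removable_rows la"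
  then obtain i where i: "i \<in> removable_rows la" and c: "c = (i, la ! i - 1)" by blast
  have len: "i < length la" and pos: "0 < la ! i"
    using i partition_nth_pos[OF la] unfolding removable_rows_def by auto
  have "(i', j') \<notin> diagram la" if "i \<le> i'" "la ! i - 1 \<le> j'" "(i', j') \<noteq> c" for i' j'
  proof
    assume in_la: "(i', j') \<in> diagram la"
    then have "i' < length la" "j' < la ! i'" unfolding diagram_def by auto
    with partition_nth_antimono[OF la \<open>i \<le> i'\<close>] that have "i < i'" "la ! i' = la ! i"
      using c by (auto simp: nat_neq_iff)
    with partition_nth_antimono[OF la, of "Suc i" i'] \<open>i' < length la\<close> i
    show False unfolding removable_rows_def by auto
  qed
  then have "young_ideal (diagram la - {c})"
    using young_ideal_remove_iff[OF young_ideal_diagram[OF la]] c by simp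
  moreover have "c \<in> diagram la" using c len pos unfolding diagram_def by auto
  ultimately show "c \<in> removable (diagram la)" unfolding removable_def by simp
qed

lemma finite_ups: "finite (ups mu)"
proof (cases "is_partition mu")
  case True
  have "finite (addable (diagram mu))"
    unfolding addable_diagram[OF True] addable_rows_def by simp
  then show ?thesis using bij_betw_finite[OF bij_betw_addable_ups[OF True]] by simp
qed (simp add: ups_def covers_def)

lemma finite_downs: "finite (downs la)"
proof (cases "is_partition la")
  case True
  have "finite (removable (diagram la))"
    unfolding removable_diagram[OF True] removable_rows_def by simp
  then show ?thesis using bij_betw_finite[OF bij_betw_removable_downs[OF True]] by simp
qed (simp add: downs_def covers_def)

text \<open>Addable and removable corners alternate along the rim of a Young diagram.\<close>

lemma card_ups:
  assumes "is_partition mu"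
  shows "card (ups mu) = Suc (card (downs mu))"
proof -
  have "card (ups mu) = card (addable (diagram mu))"
    using bij_betw_same_card[OF bij_betw_addable_ups[OF assms]] by simp
  also have "\<dots> = card (addable_rows mu)"
    unfolding addable_diagram[OF assms] by (rule card_image) (auto intro: inj_onI)
  finally have ups: "card (ups mu) = card (addable_rows mu)" .
  have "card (downs mu) = card (removable (diagram mu))"
    using bij_betw_same_card[OF bij_betw_removable_downs[OF assms]] by simp
  also have "\<dots> = card (removable_rows mu)"
    unfolding removable_diagram[OF assms] by (rule card_image) (auto intro: inj_onI)
  finally show ?thesis using ups card_addable_rows by simp
qed

section \<open>Oscillating tableaux as walks\<close>

lemma covers_psize: "covers mu la \<Longrightarrow> psize la = Suc (psize mu)"
  unfolding covers_def psize_eq_card_diagram using finite_diagram by auto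

lemma
  assumes "nu \<in> ups mu"
  shows psize_ups: "psize nu = Suc (psize mu)" and is_partition_ups: "is_partition nu"
  using assms covers_psize unfolding ups_def covers_def by auto

lemma
  assumes "nu \<in> downs mu"
  shows psize_downs: "psize mu = Suc (psize nu)" and is_partition_downs: "is_partition nu"
  using assms covers_psize unfolding downs_def covers_def by auto

definition neighbours :: "nat list \<Rightarrow> nat list set" where
  "neighbours la = ups la \<union> downs la"

lemma neighbours_sym: "nu \<in> neighbours mu \<longleftrightarrow> mu \<in> neighbours nu"
  unfolding neighbours_def ups_def downs_def by blast

lemma finite_neighbours: "finite (neighbours la)"
  unfolding neighbours_def by (simp add: finite_ups finite_downs)

lemma sum_neighbours:
  "(\<Sum>nu\<in>neighbours la. g nu) = (\<Sum>nu\<in>downs la. g nu) + (\<Sum>nu\<in>ups la. g nu)"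
proof -
  have "ups la \<inter> downs la = {}"
    unfolding ups_def downs_def by (auto dest!: covers_psize)
  then show ?thesis
    unfolding neighbours_def by (simp add: sum.union_disjoint finite_ups finite_downs add.commute)
qed

lemma OT_conv_successively:
  "OT la l = {T. length T = Suc l \<and> hd T = [] \<and> last T = la \<and>
                 successively (\<lambda>mu nu. nu \<in> neighbours mu) T}"
proof -
  have adjacent: "covers (T ! (i - 1)) (T ! i) \<or> covers (T ! i) (T ! (i - 1))
      \<longleftrightarrow> T ! Suc (i - 1) \<in> neighbours (T ! (i - 1))" if "1 \<le> i" for T :: "nat list list" and i
    using that unfolding neighbours_def ups_def downs_def by auto
  have "(\<forall>i. 1 \<le> i \<and> i \<le> l \<longrightarrow> covers (T ! (i - 1)) (T ! i) \<or> covers (T ! i) (T ! (i - 1)))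
        \<longleftrightarrow> (\<forall>i. Suc i < Suc l \<longrightarrow> T ! Suc i \<in> neighbours (T ! i))" for T
  proof (intro iffI allI impI)
    fix i assume steps: "\<forall>i. 1 \<le> i \<and> i \<le> l \<longrightarrow> covers (T ! (i - 1)) (T ! i) \<or> covers (T ! i) (T ! (i - 1))"
      and "Suc i < Suc l"
    then show "T ! Suc i \<in> neighbours (T ! i)"
      using steps[rule_format, of "Suc i"] adjacent[of "Suc i" T] by simp
  next
    fix i assume steps: "\<forall>i. Suc i < Suc l \<longrightarrow> T ! Suc i \<in> neighbours (T ! i)"
      and i: "1 \<le> i \<and> i \<le> l"
    then show "covers (T ! (i - 1)) (T ! i) \<or> covers (T ! i) (T ! (i - 1))"
      using steps[rule_format, of "i - 1"] adjacent[of i T] by simp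
  qed
  moreover have "hd T = T ! 0 \<and> last T = T ! l" if "length T = Suc l" for T :: "nat list list"
    using that by (cases T) (auto simp: last_conv_nth)
  ultimately show ?thesis
    unfolding OT_def successively_conv_nth by auto
qed

lemma OT_0: "OT la 0 = (if la = [] then {[[]]} else {})"
proof -
  have "T \<in> OT la 0 \<longleftrightarrow> la = [] \<and> T = [[]]" for T
    unfolding OT_conv_successively by (cases T) auto
  then show ?thesis by auto
qed

lemma OT_Suc: "OT la (Suc l) = (\<lambda>T. T @ [la]) ` (\<Union>nu\<in>neighbours la. OT nu l)"
proof (intro equalityI subsetI)
  fix T assume "T \<in> OT la (Suc l)"
  then have T: "length T = Suc (Suc l)" "hd T = []" "last T = la"
    "successively (\<lambda>mu nu. nu \<in> neighbours mu) T"
    unfolding OT_conv_successively by auto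
  define T0 where "T0 = butlast T"
  have "T = T0 @ [la]"
    unfolding T0_def using T(1,3) by (metis append_butlast_last_id list.size(3) nat.distinct(1))
  moreover have "T0 \<noteq> []" using T(1) unfolding T0_def by (cases T) auto
  ultimately have "T0 \<in> OT (last T0) l" and "last T0 \<in> neighbours la"
    using T unfolding OT_conv_successively by (auto simp: successively_append_iff neighbours_sym)
  with \<open>T = T0 @ [la]\<close> show "T \<in> (\<lambda>T. T @ [la]) ` (\<Union>nu\<in>neighbours la. OT nu l)" by blast
next
  fix T assume "T \<in> (\<lambda>T. T @ [la]) ` (\<Union>nu\<in>neighbours la. OT nu l)"
  then obtain T0 nu where T: "T = T0 @ [la]" and nu: "nu \<in> neighbours la" and T0: "T0 \<in> OT nu l"
    by blast
  from T0 have "T0 \<noteq> []" unfolding OT_conv_successively by auto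
  with T T0 nu show "T \<in> OT la (Suc l)"
    unfolding OT_conv_successively by (auto simp: successively_append_iff neighbours_sym)
qed

lemma finite_OT: "finite (OT la l)"
  by (induction l arbitrary: la) (simp_all add: OT_0 OT_Suc finite_neighbours)

lemma OT_eq_empty: "l < psize la \<Longrightarrow> OT la l = {}"
proof (induction l arbitrary: la)
  case 0
  then show ?case by (auto simp: OT_0 psize_def)
next
  case (Suc l)
  have "OT nu l = {}" if "nu \<in> neighbours la" for nu
    using that Suc psize_ups psize_downs unfolding neighbours_def by force
  then show ?case unfolding OT_Suc by simp
qed

lemma disjoint_OT: "nu \<noteq> nu' \<Longrightarrow> OT nu l \<inter> OT nu' l = {}"
  unfolding OT_conv_successively by auto

lemma card_OT_Suc: "card (OT la (Suc l)) = (\<Sum>nu\<in>neighbours la. card (OT nu l))"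
proof -
  have "card (OT la (Suc l)) = card (\<Union>nu\<in>neighbours la. OT nu l)"
    unfolding OT_Suc by (rule card_image) (auto intro: inj_onI)
  also have "\<dots> = (\<Sum>nu\<in>neighbours la. card (OT nu l))"
    by (rule card_UN_disjoint) (simp_all add: finite_neighbours finite_OT disjoint_OT)
  finally show ?thesis .
qed

lemma sum_wt_OT_Suc:
  "(\<Sum>T\<in>OT la (Suc l). real (wt T))
     = (\<Sum>nu\<in>neighbours la. (\<Sum>T\<in>OT nu l. real (wt T)) + real (psize la) * card (OT nu l))"
proof -
  have wt_snoc: "wt (T @ [la]) = wt T + psize la" for T
    unfolding wt_def by (simp add: nth_append)
  have "(\<Sum>T\<in>OT la (Suc l). real (wt T)) = (\<Sum>T\<in>(\<Union>nu\<in>neighbours la. OT nu l). real (wt (T @ [la])))"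
    unfolding OT_Suc by (subst sum.reindex) (auto intro: inj_onI)
  also have "\<dots> = (\<Sum>nu\<in>neighbours la. \<Sum>T\<in>OT nu l. real (wt (T @ [la])))"
    by (rule sum.UNION_disjoint) (simp_all add: finite_neighbours finite_OT disjoint_OT)
  finally show ?thesis by (simp add: wt_snoc sum.distrib mult.commute)
qed

section \<open>The up-down identity for standard Young tableaux\<close>

lemma covers_partition_of_iff:
  assumes "is_partition mu" "young_ideal D"
  shows "covers mu (partition_of D) \<longleftrightarrow> (\<exists>c. c \<notin> diagram mu \<and> D = insert c (diagram mu))"
  using assms is_partition_partition_of diagram_partition_of unfolding covers_def by metis

lemma partition_of_covers_iff:
  assumes "young_ideal D" "is_partition la"
  shows "covers (partition_of D) la \<longleftrightarrow> (\<exists>c. c \<notin> D \<and> diagram la = insert c D)"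
  using assms is_partition_partition_of diagram_partition_of unfolding covers_def by metis

lemma covers_join:
  assumes "covers sg mu" "covers sg rho" "mu \<noteq> rho"
  shows "covers mu (partition_of (diagram mu \<union> diagram rho))"
    and "covers rho (partition_of (diagram mu \<union> diagram rho))"
    and "diagram mu \<inter> diagram rho = diagram sg"
proof -
  obtain x where x: "x \<notin> diagram sg" "diagram mu = insert x (diagram sg)"
    using assms(1) unfolding covers_def by blast
  obtain y where y: "y \<notin> diagram sg" "diagram rho = insert y (diagram sg)"
    using assms(2) unfolding covers_def by blast
  have partitions: "is_partition mu" "is_partition rho"
    using assms(1,2) unfolding covers_def by auto
  with assms(3) have "x \<noteq> y" using x y diagram_inject by metis
  have "young_ideal (diagram mu \<union> diagram rho)"
    using young_ideal_diagram[OF partitions(1)] young_ideal_diagram[OF partitions(2)]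
    unfolding young_ideal_def by blast
  moreover have "diagram mu \<union> diagram rho = insert y (diagram mu)" "y \<notin> diagram mu"
    and "diagram mu \<union> diagram rho = insert x (diagram rho)" "x \<notin> diagram rho"
    using x y \<open>x \<noteq> y\<close> by auto
  ultimately show "covers mu (partition_of (diagram mu \<union> diagram rho))"
    and "covers rho (partition_of (diagram mu \<union> diagram rho))"
    using covers_partition_of_iff partitions by blast+
  show "diagram mu \<inter> diagram rho = diagram sg" using x y \<open>x \<noteq> y\<close> by auto
qed

lemma covers_meet:
  assumes "covers mu nu" "covers rho nu" "mu \<noteq> rho"
  shows "covers (partition_of (diagram mu \<inter> diagram rho)) mu"
    and "covers (partition_of (diagram mu \<inter> diagram rho)) rho"
    and "diagram mu \<union> diagram rho = diagram nu"
proof -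
  obtain x where x: "x \<notin> diagram mu" "diagram nu = insert x (diagram mu)"
    using assms(1) unfolding covers_def by blast
  obtain y where y: "y \<notin> diagram rho" "diagram nu = insert y (diagram rho)"
    using assms(2) unfolding covers_def by blast
  have partitions: "is_partition mu" "is_partition rho"
    using assms(1,2) unfolding covers_def by auto
  have removed: "diagram mu = diagram nu - {x}" "diagram rho = diagram nu - {y}"
    using x y by auto
  have "x \<noteq> y"
  proof
    assume "x = y"
    then have "diagram mu = diagram rho" unfolding removed by simp
    with assms(3) partitions show False using diagram_inject by blast
  qed
  have "young_ideal (diagram mu \<inter> diagram rho)"
    using young_ideal_diagram[OF partitions(1)] young_ideal_diagram[OF partitions(2)]
    unfolding young_ideal_def by blast
  moreover have "diagram mu = insert y (diagram mu \<inter> diagram rho)" "y \<notin> diagram mu \<inter> diagram rho"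
    and "diagram rho = insert x (diagram mu \<inter> diagram rho)" "x \<notin> diagram mu \<inter> diagram rho"
    using x y \<open>x \<noteq> y\<close> unfolding removed by auto
  ultimately show "covers (partition_of (diagram mu \<inter> diagram rho)) mu"
    and "covers (partition_of (diagram mu \<inter> diagram rho)) rho"
    using partition_of_covers_iff partitions by blast+
  show "diagram mu \<union> diagram rho = diagram nu" using x y \<open>x \<noteq> y\<close> unfolding removed by auto
qed

text \<open>The diamond bijection behind the commutation relation \<open>D U - U D = I\<close> of Young's lattice:
  a path up to \<open>nu\<close> and down to \<open>rho \<noteq> mu\<close> corresponds to a path down to
  \<open>sg\<close> and up to \<open>rho\<close>, via \<open>nu = mu \<union> rho\<close> and \<open>sg = mu \<inter> rho\<close>.\<close>

lemma sum_ups_downs_swap: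
  assumes "is_partition mu"
  shows "(\<Sum>nu\<in>ups mu. \<Sum>rho\<in>downs nu - {mu}. g rho) = (\<Sum>sg\<in>downs mu. \<Sum>rho\<in>ups sg - {mu}. g rho)"
proof -
  let ?UD = "Sigma (ups mu) (\<lambda>nu. downs nu - {mu})"
  let ?DU = "Sigma (downs mu) (\<lambda>sg. ups sg - {mu})"
  let ?meet = "\<lambda>(nu, rho). (partition_of (diagram mu \<inter> diagram rho), rho)"
  let ?join = "\<lambda>(sg, rho). (partition_of (diagram mu \<union> diagram rho), rho)"
  have "(\<Sum>nu\<in>ups mu. \<Sum>rho\<in>downs nu - {mu}. g rho) = (\<Sum>(nu, rho)\<in>?UD. g rho)"
    by (rule sum.Sigma) (simp_all add: finite_ups finite_downs)
  also have "\<dots> = (\<Sum>(sg, rho)\<in>?DU. g rho)"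
  proof (rule sum.reindex_bij_witness[of _ ?join ?meet])
    fix a assume "a \<in> ?UD"
    then obtain nu rho where a: "a = (nu, rho)" "covers mu nu" "covers rho nu" "rho \<noteq> mu"
      unfolding ups_def downs_def by auto
    then have "mu \<noteq> rho" by simp
    note meet = covers_meet[OF a(2,3) this]
    show "?meet a \<in> ?DU" using meet a unfolding ups_def downs_def by auto
    have "is_partition nu" using a(2) unfolding covers_def by simp
    then show "?join (?meet a) = a" by (simp add: a(1) meet(3) partition_of_diagram)
    show "(case ?meet a of (sg, rho) \<Rightarrow> g rho) = (case a of (nu, rho) \<Rightarrow> g rho)"
      using a by simp
  next
    fix b assume "b \<in> ?DU"
    then obtain sg rho where b: "b = (sg, rho)" "covers sg mu" "covers sg rho" "rho \<noteq> mu"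
      unfolding ups_def downs_def by auto
    then have "mu \<noteq> rho" by simp
    note join = covers_join[OF b(2,3) this]
    show "?join b \<in> ?UD" using join b unfolding ups_def downs_def by auto
    have "is_partition sg" using b(2) unfolding covers_def by simp
    then show "?meet (?join b) = b" by (simp add: b(1) join(3) partition_of_diagram)
  qed
  also have "\<dots> = (\<Sum>sg\<in>downs mu. \<Sum>rho\<in>ups sg - {mu}. g rho)"
    by (rule sum.Sigma[symmetric]) (simp_all add: finite_ups finite_downs)
  finally show ?thesis .
qed

text \<open>An oscillating tableau of length \<open>|la|\<close> can only go up, so it is a standard Young tableau.\<close>

definition num_syt :: "nat list \<Rightarrow> nat" where
  "num_syt la = card (OT la (psize la))"

lemma num_syt_eq_sum_downs:
  assumes "psize la = Suc m"
  shows "num_syt la = (\<Sum>mu\<in>downs la. num_syt mu)"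
proof -
  have "num_syt la = (\<Sum>mu\<in>downs la. card (OT mu m)) + (\<Sum>nu\<in>ups la. card (OT nu m))"
    unfolding num_syt_def assms card_OT_Suc sum_neighbours ..
  also have "(\<Sum>nu\<in>ups la. card (OT nu m)) = 0"
    using assms psize_ups OT_eq_empty by (simp add: sum.neutral)
  also have "(\<Sum>mu\<in>downs la. card (OT mu m)) = (\<Sum>mu\<in>downs la. num_syt mu)"
    using assms psize_downs unfolding num_syt_def by (intro sum.cong) auto
  finally show ?thesis by simp
qed

lemma sum_num_syt_ups:
  assumes "is_partition mu"
  shows "(\<Sum>nu\<in>ups mu. num_syt nu) = Suc (psize mu) * num_syt mu"
  using assms
proof (induction "psize mu" arbitrary: mu rule: less_induct)
  case less
  let ?m = "psize mu"
  let ?rest = "\<Sum>sg\<in>downs mu. \<Sum>rho\<in>ups sg - {mu}. num_syt rho"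
  have "(\<Sum>nu\<in>ups mu. num_syt nu) = (\<Sum>nu\<in>ups mu. num_syt mu + (\<Sum>rho\<in>downs nu - {mu}. num_syt rho))"
  proof (rule sum.cong[OF refl])
    fix nu assume nu: "nu \<in> ups mu"
    then have "mu \<in> downs nu" unfolding ups_def downs_def by simp
    then show "num_syt nu = num_syt mu + (\<Sum>rho\<in>downs nu - {mu}. num_syt rho)"
      using num_syt_eq_sum_downs[OF psize_ups[OF nu]] by (simp add: sum.remove finite_downs)
  qed
  also have "\<dots> = card (ups mu) * num_syt mu + ?rest"
    by (simp add: sum.distrib sum_ups_downs_swap[OF less.prems])
  finally have ups: "(\<Sum>nu\<in>ups mu. num_syt nu) = card (ups mu) * num_syt mu + ?rest" .
  have "?rest + card (downs mu) * num_syt mu = (\<Sum>sg\<in>downs mu. ?m * num_syt sg)"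
  proof -
    have "(\<Sum>rho\<in>ups sg - {mu}. num_syt rho) + num_syt mu = ?m * num_syt sg" if sg: "sg \<in> downs mu" for sg
    proof -
      have "mu \<in> ups sg" using sg unfolding ups_def downs_def by simp
      then have "(\<Sum>rho\<in>ups sg - {mu}. num_syt rho) + num_syt mu = (\<Sum>rho\<in>ups sg. num_syt rho)"
        by (simp add: sum.remove finite_ups)
      also have "\<dots> = ?m * num_syt sg"
        using less.hyps[of sg] psize_downs[OF sg] is_partition_downs[OF sg] by simp
      finally show ?thesis .
    qed
    then have "(\<Sum>sg\<in>downs mu. ?m * num_syt sg)
        = (\<Sum>sg\<in>downs mu. (\<Sum>rho\<in>ups sg - {mu}. num_syt rho) + num_syt mu)"
      by (intro sum.cong) simp_all
    then show ?thesis by (simp add: sum.distrib)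
  qed
  also have "\<dots> = ?m * (\<Sum>sg\<in>downs mu. num_syt sg)"
    by (simp add: sum_distrib_left)
  also have "\<dots> = ?m * num_syt mu"
    by (cases ?m) (simp_all add: num_syt_eq_sum_downs)
  finally show ?case using ups card_ups[OF less.prems] by (simp add: algebra_simps)
qed

lemma downs_nonempty:
  assumes "is_partition la" "la \<noteq> []"
  shows "downs la \<noteq> {}"
proof -
  have "length la - 1 \<in> removable_rows la" using assms(2) unfolding removable_rows_def by auto
  then have "removable (diagram la) \<noteq> {}" unfolding removable_diagram[OF assms(1)] by blast
  then show ?thesis using bij_betw_removable_downs[OF assms(1)] by (auto simp: bij_betw_def)
qed

lemma num_syt_pos:
  assumes "is_partition la"
  shows "0 < num_syt la"
  using assms
proof (induction "psize la" arbitrary: la)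
  case 0
  then have "la = []" unfolding psize_def is_partition_def by (cases la) auto
  then show ?case by (simp add: num_syt_def OT_0 psize_def)
next
  case (Suc m)
  have "la \<noteq> []" using Suc.hyps(2) by (auto simp: psize_def)
  with Suc.prems have "downs la \<noteq> {}" by (rule downs_nonempty)
  moreover have "0 < num_syt mu" if "mu \<in> downs la" for mu
    using Suc.hyps is_partition_downs[OF that] psize_downs[OF that] by simp
  ultimately show ?case
    using num_syt_eq_sum_downs[OF Suc.hyps(2)[symmetric]] finite_downs by (simp add: sum_pos)
qed

section \<open>Counting and weighing oscillating tableaux\<close>

text \<open>\<open>walk_coeff m n = (m + 2n choose m) (2n - 1)!!\<close>.\<close>

definition walk_coeff :: "nat \<Rightarrow> nat \<Rightarrow> real" where
  "walk_coeff m n = fact (m + 2 * n) / (fact m * 2 ^ n * fact n)"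

definition weight_coeff :: "nat \<Rightarrow> nat \<Rightarrow> real" where
  "weight_coeff m n = walk_coeff m n * (real (m + 2 * n + 1) * (real n / 3 + real m / 2))"

lemma walk_coeff_pos: "0 < walk_coeff m n"
  unfolding walk_coeff_def by simp

lemma walk_coeff_Suc_left:
  "real (Suc m) * walk_coeff (Suc m) n = real (Suc m + 2 * n) * walk_coeff m n"
proof -
  have "fact (Suc m + 2 * n) = real (Suc m + 2 * n) * (fact (m + 2 * n) :: real)"
    unfolding add_Suc by (rule fact_Suc)
  then show ?thesis unfolding walk_coeff_def fact_Suc[of m]
    by (simp add: field_simps del: of_nat_Suc of_nat_add)
qed

lemma walk_coeff_Suc_right:
  "real (m + 2 * Suc n) * (walk_coeff (Suc m) n * real (Suc m)) = real (2 * Suc n) * walk_coeff m (Suc n)"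
proof -
  have "m + 2 * Suc n = Suc (Suc m + 2 * n)" by simp
  then have "fact (m + 2 * Suc n) = real (m + 2 * Suc n) * (fact (Suc m + 2 * n) :: real)"
    by (simp only: fact_Suc)
  then show ?thesis unfolding walk_coeff_def fact_Suc[of m] fact_Suc[of n] power_Suc
    by (simp add: field_simps del: of_nat_Suc of_nat_add) simp
qed

lemma walk_coeff_down_step:
  "real (m + 2 * n) * (if m = 0 then 0 else walk_coeff (m - 1) n) = real m * walk_coeff m n"
proof (cases m)
  case (Suc k)
  then show ?thesis using walk_coeff_Suc_left[of k n] by simp
qed simp

lemma walk_coeff_up_step:
  "real (m + 2 * n) * ((if n = 0 then 0 else walk_coeff (Suc m) (n - 1)) * real (Suc m))
     = real (2 * n) * walk_coeff m n"
proof (cases n)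
  case (Suc k)
  then show ?thesis using walk_coeff_Suc_right[of m k] by simp
qed simp

lemma walk_coeff_rec:
  assumes "0 < m + n"
  shows "(if m = 0 then 0 else walk_coeff (m - 1) n)
           + (if n = 0 then 0 else walk_coeff (Suc m) (n - 1)) * real (Suc m) = walk_coeff m n"
proof -
  have "real (m + 2 * n) \<noteq> 0" using assms by (simp del: of_nat_add)
  moreover have "real (m + 2 * n) * ((if m = 0 then 0 else walk_coeff (m - 1) n)
           + (if n = 0 then 0 else walk_coeff (Suc m) (n - 1)) * real (Suc m))
      = real (m + 2 * n) * walk_coeff m n"
    unfolding distrib_left walk_coeff_down_step walk_coeff_up_step by (simp add: algebra_simps)
  ultimately show ?thesis by simp
qed

lemma weight_coeff_rec:
  "(if m = 0 then 0 else weight_coeff (m - 1) n)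
     + (if n = 0 then 0 else weight_coeff (Suc m) (n - 1)) * real (Suc m)
     + real m * walk_coeff m n = weight_coeff m n"
proof -
  let ?N = "real (m + 2 * n)"
  define d where "d = (if m = 0 then 0 else walk_coeff (m - 1) n)"
  define u where "u = (if n = 0 then 0 else walk_coeff (Suc m) (n - 1)) * real (Suc m)"
  have "(if m = 0 then 0 else weight_coeff (m - 1) n) = d * (?N * (real n / 3 + (real m - 1) / 2))"
    unfolding d_def by (cases m) (simp_all add: weight_coeff_def)
  moreover have "(if n = 0 then 0 else weight_coeff (Suc m) (n - 1)) * real (Suc m)
      = u * (?N * ((real n - 1) / 3 + (real m + 1) / 2))"
    unfolding u_def by (cases n) (simp_all add: weight_coeff_def field_simps)
  ultimately have "(if m = 0 then 0 else weight_coeff (m - 1) n)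
     + (if n = 0 then 0 else weight_coeff (Suc m) (n - 1)) * real (Suc m)
     + real m * walk_coeff m n
      = (?N * d) * (real n / 3 + (real m - 1) / 2) + (?N * u) * ((real n - 1) / 3 + (real m + 1) / 2)
        + real m * walk_coeff m n"
    by (simp only: ac_simps)
  also have "\<dots> = walk_coeff m n * (real m * (real n / 3 + (real m - 1) / 2)
      + real (2 * n) * ((real n - 1) / 3 + (real m + 1) / 2) + real m)"
    unfolding d_def u_def walk_coeff_down_step walk_coeff_up_step by (simp add: algebra_simps)
  also have "\<dots> = weight_coeff m n"
    unfolding weight_coeff_def by (simp add: field_simps)
  finally show ?thesis .
qed

lemma sum_downs_num_syt_multiple:
  assumes "\<And>mu. mu \<in> downs la \<Longrightarrow> g mu = c * real (num_syt mu)"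
  shows "(\<Sum>mu\<in>downs la. g mu) = (if psize la = 0 then 0 else c) * real (num_syt la)"
proof (cases "psize la")
  case 0
  then have "downs la = {}" using psize_downs by fastforce
  then show ?thesis using 0 by simp
next
  case (Suc m)
  then show ?thesis
    using assms num_syt_eq_sum_downs[OF Suc] by (simp add: sum_distrib_left)
qed

lemma sum_ups_num_syt_multiple:
  assumes "is_partition mu" "\<And>nu. nu \<in> ups mu \<Longrightarrow> g nu = c * real (num_syt nu)"
  shows "(\<Sum>nu\<in>ups mu. g nu) = c * real (Suc (psize mu)) * real (num_syt mu)"
proof -
  have "(\<Sum>nu\<in>ups mu. g nu) = c * real (\<Sum>nu\<in>ups mu. num_syt nu)"
    using assms(2) by (simp add: sum_distrib_left)
  then show ?thesis unfolding sum_num_syt_ups[OF assms(1)] by (simp add: algebra_simps)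
qed

lemma card_OT_Suc_closed_form:
  assumes "is_partition mu" "0 < psize mu + n"
    and "\<And>nu. nu \<in> downs mu \<Longrightarrow>
           real (card (OT nu l)) = walk_coeff (psize mu - 1) n * real (num_syt nu)"
    and "\<And>nu. nu \<in> ups mu \<Longrightarrow> real (card (OT nu l))
           = (if n = 0 then 0 else walk_coeff (Suc (psize mu)) (n - 1)) * real (num_syt nu)"
  shows "real (card (OT mu (Suc l))) = walk_coeff (psize mu) n * real (num_syt mu)"
proof -
  let ?m = "psize mu" and ?card = "\<lambda>nu. real (card (OT nu l))"
  have "(\<Sum>nu\<in>downs mu. ?card nu)
      = (if ?m = 0 then 0 else walk_coeff (?m - 1) n) * real (num_syt mu)"
    by (rule sum_downs_num_syt_multiple) (rule assms(3))
  moreover have "(\<Sum>nu\<in>ups mu. ?card nu)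
      = (if n = 0 then 0 else walk_coeff (Suc ?m) (n - 1)) * real (Suc ?m) * real (num_syt mu)"
    by (rule sum_ups_num_syt_multiple[OF assms(1)]) (rule assms(4))
  moreover have "real (card (OT mu (Suc l))) = (\<Sum>nu\<in>downs mu. ?card nu) + (\<Sum>nu\<in>ups mu. ?card nu)"
    by (simp add: card_OT_Suc sum_neighbours)
  ultimately have "real (card (OT mu (Suc l))) = ((if ?m = 0 then 0 else walk_coeff (?m - 1) n)
      + (if n = 0 then 0 else walk_coeff (Suc ?m) (n - 1)) * real (Suc ?m)) * real (num_syt mu)"
    by (simp only: distrib_right)
  then show ?thesis unfolding walk_coeff_rec[OF assms(2)] .
qed

lemma sum_wt_OT_Suc_closed_form:
  assumes "is_partition mu"
    and card: "real (card (OT mu (Suc l))) = walk_coeff (psize mu) n * real (num_syt mu)"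
    and "\<And>nu. nu \<in> downs mu \<Longrightarrow>
           (\<Sum>T\<in>OT nu l. real (wt T)) = weight_coeff (psize mu - 1) n * real (num_syt nu)"
    and "\<And>nu. nu \<in> ups mu \<Longrightarrow> (\<Sum>T\<in>OT nu l. real (wt T))
           = (if n = 0 then 0 else weight_coeff (Suc (psize mu)) (n - 1)) * real (num_syt nu)"
  shows "(\<Sum>T\<in>OT mu (Suc l). real (wt T)) = weight_coeff (psize mu) n * real (num_syt mu)"
proof -
  let ?m = "psize mu" and ?wt = "\<lambda>nu. \<Sum>T\<in>OT nu l. real (wt T)"
  have "(\<Sum>nu\<in>downs mu. ?wt nu)
      = (if ?m = 0 then 0 else weight_coeff (?m - 1) n) * real (num_syt mu)"
    by (rule sum_downs_num_syt_multiple) (rule assms(3))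
  moreover have "(\<Sum>nu\<in>ups mu. ?wt nu)
      = (if n = 0 then 0 else weight_coeff (Suc ?m) (n - 1)) * real (Suc ?m) * real (num_syt mu)"
    by (rule sum_ups_num_syt_multiple[OF assms(1)]) (rule assms(4))
  moreover have "(\<Sum>T\<in>OT mu (Suc l). real (wt T))
      = (\<Sum>nu\<in>downs mu. ?wt nu) + (\<Sum>nu\<in>ups mu. ?wt nu) + real ?m * real (card (OT mu (Suc l)))"
    unfolding sum_wt_OT_Suc card_OT_Suc
    by (simp add: sum.distrib sum_distrib_left sum_neighbours distrib_left)
  ultimately have "(\<Sum>T\<in>OT mu (Suc l). real (wt T)) = ((if ?m = 0 then 0 else weight_coeff (?m - 1) n)
      + (if n = 0 then 0 else weight_coeff (Suc ?m) (n - 1)) * real (Suc ?m)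
      + real ?m * walk_coeff ?m n) * real (num_syt mu)"
    unfolding card by (simp only: distrib_right mult.assoc)
  then show ?thesis unfolding weight_coeff_rec .
qed

lemma card_and_weight_OT:
  assumes "is_partition mu"
  shows "real (card (OT mu (psize mu + 2 * n))) = walk_coeff (psize mu) n * real (num_syt mu)
       \<and> (\<Sum>T\<in>OT mu (psize mu + 2 * n). real (wt T)) = weight_coeff (psize mu) n * real (num_syt mu)"
  using assms
proof (induction "psize mu + 2 * n" arbitrary: mu n)
  case 0
  then have "mu = []" "n = 0" unfolding psize_def is_partition_def by (cases mu; simp)+
  then show ?case by (simp add: OT_0 num_syt_def psize_def wt_def walk_coeff_def weight_coeff_def)
next
  case (Suc l)
  let ?m = "psize mu"
  have downs: "real (card (OT nu l)) = walk_coeff (?m - 1) n * real (num_syt nu)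
      \<and> (\<Sum>T\<in>OT nu l. real (wt T)) = weight_coeff (?m - 1) n * real (num_syt nu)"
    if "nu \<in> downs mu" for nu
    using Suc.hyps(1)[of nu n] Suc.hyps(2) psize_downs[OF that] is_partition_downs[OF that] by simp
  have ups: "real (card (OT nu l)) = (if n = 0 then 0 else walk_coeff (Suc ?m) (n - 1)) * real (num_syt nu)
      \<and> (\<Sum>T\<in>OT nu l. real (wt T))
          = (if n = 0 then 0 else weight_coeff (Suc ?m) (n - 1)) * real (num_syt nu)"
    if "nu \<in> ups mu" for nu
  proof (cases n)
    case 0
    then show ?thesis using Suc.hyps(2) psize_ups[OF that] OT_eq_empty by simp
  next
    case (Suc n')
    then show ?thesis
      using Suc.hyps(1)[of nu n'] \<open>Suc l = ?m + 2 * n\<close> psize_ups[OF that] is_partition_ups[OF that]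
      by simp
  qed
  have "0 < ?m + n" using Suc.hyps(2) by arith
  then have card: "real (card (OT mu (Suc l))) = walk_coeff ?m n * real (num_syt mu)"
    by (rule card_OT_Suc_closed_form[OF Suc.prems]) (use downs ups in blast)+
  moreover have "(\<Sum>T\<in>OT mu (Suc l). real (wt T)) = weight_coeff ?m n * real (num_syt mu)"
    by (rule sum_wt_OT_Suc_closed_form[OF Suc.prems card]) (use downs ups in blast)+
  ultimately show ?case unfolding Suc.hyps(2) ..
qed

theorem corollary3:
  fixes la :: "nat list" and k n :: nat
  assumes "is_partition la" and "psize la = k"
  shows "(\<Sum>T\<in>OT la (k + 2 * n). real (wt T))
           / (real (card (OT la (k + 2 * n))) * real (2 * n + k + 1))
         = real n / 3 + real k / 2"
proof -
  have "real (card (OT la (k + 2 * n))) = walk_coeff k n * real (num_syt la)"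
    and "(\<Sum>T\<in>OT la (k + 2 * n). real (wt T)) = weight_coeff k n * real (num_syt la)"
    using card_and_weight_OT[OF assms(1), of n] assms(2) by simp_all
  moreover have "0 < walk_coeff k n * real (num_syt la) * real (2 * n + k + 1)"
    using walk_coeff_pos num_syt_pos[OF assms(1)] by simp
  ultimately show ?thesis unfolding weight_coeff_def by (simp add: field_simps)
qed
end
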